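(* Let $I$ be an instance of 2-SCSS-$(k,1)$ given by a directed graph $G=(V,E)$ with edge weights $\omega:E\to\mathbb{R}^{\geq 0}$ and terminals $s,t$, and let $I'$ be the Token Game constructed from $I$ as described in the context. Then $\mathrm{OPT}(I)\leq \mathrm{OPT}(I')$.
   Context: 2-SCSS-$(k,1)$: find $k$ paths $F_1,\dots,F_k$ from $s$ to $t$ and one path $B$ from $t$ to $s$ minimizing $\sum_{e\in E}\omega(e)\max\{|\{i: e\in F_i\}|,\ [e\in B]\}$; $\mathrm{OPT}(I)$ is this minimum. The Token Game $I'$: tokens $\mathbf{b},\mathbf{f}_1,\dots,\mathbf{f}_k$; states are vectors $\bar v=(v_0,v_1,\dots,v_k)\in V^{k+1}$ ($v_0$ the location of $\mathbf{b}$, $v_i$ that of $\mathbf{f}_i$); start state $(s,\dots,s)$, end state $(t,\dots,t)$. From each state $\bar v$ the moves are: (Backward) for each edge $(w,v_0)\in E$, move to the state obtained by replacing $v_0$ by $w$, at cost $\omega(w,v_0)$; (Forward) for each $i\in[k]$ and each edge $(v_i,x)\in E$, move to the state obtained by replacing $v_i$ by $x$, at cost $\omega(v_i,x)$; (Flip) for each $i\in[k]$, move to the state obtained by swapping $v_0$ and $v_i$ (new coordinate $0$ is $v_i$, new coordinate $i$ is $v_0$, others unchanged), at cost equal to the weight of a shortest $v_i\leadsto v_0$ path in $G$. $\mathrm{OPT}(I')$ is the minimum total cost of a sequence of moves from the start state to the end state. *)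

theory Defs
  imports Main "HOL-Library.Extended_Real"
begin

(* A directed graph is given by its edge set E :: ('v \<times> 'v) set over vertex set V,
   weights \<omega> :: 'v \<times> 'v \<Rightarrow> real.  A path is represented by its vertex list. *)

definition walk :: "('v \<times> 'v) set \<Rightarrow> 'v list \<Rightarrow> 'v \<Rightarrow> 'v \<Rightarrow> bool" where
  "walk E p u v \<longleftrightarrow> p \<noteq> [] \<and> hd p = u \<and> last p = v \<and> set (zip p (tl p)) \<subseteq> E"

definition edges_of :: "'v list \<Rightarrow> ('v \<times> 'v) set" where
  "edges_of p = set (zip p (tl p))"

(* weight of a path (edges counted with multiplicity) *)
definition walk_weight :: "('v \<times> 'v \<Rightarrow> real) \<Rightarrow> 'v list \<Rightarrow> real" where
  "walk_weight \<omega> p = sum_list (map \<omega> (zip p (tl p)))"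

definition scss_cost ::
  "('v \<times> 'v) set \<Rightarrow> ('v \<times> 'v \<Rightarrow> real) \<Rightarrow> nat \<Rightarrow> (nat \<Rightarrow> 'v list) \<Rightarrow> 'v list \<Rightarrow> real" where
  "scss_cost E \<omega> k F B =
     (\<Sum>e\<in>E. \<omega> e * real (max (card {i\<in>{1..k}. e \<in> edges_of (F i)})
                                   (if e \<in> edges_of B then 1 else 0)))"

definition scss_feasible ::
  "('v \<times> 'v) set \<Rightarrow> nat \<Rightarrow> 'v \<Rightarrow> 'v \<Rightarrow> (nat \<Rightarrow> 'v list) \<Rightarrow> 'v list \<Rightarrow> bool" where
  "scss_feasible E k s t F B \<longleftrightarrow> (\<forall>i\<in>{1..k}. walk E (F i) s t) \<and> walk E B t s"

(* OPT(I), as an extended real (infinity if there is no feasible solution) *)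
definition OPT_scss ::
  "('v \<times> 'v) set \<Rightarrow> ('v \<times> 'v \<Rightarrow> real) \<Rightarrow> nat \<Rightarrow> 'v \<Rightarrow> 'v \<Rightarrow> ereal" where
  "OPT_scss E \<omega> k s t =
     (INF FB \<in> {(F, B). scss_feasible E k s t F B}. ereal (scss_cost E \<omega> k (fst FB) (snd FB)))"

(* weight of a shortest u \<leadsto> v path in G (infinity if none exists) *)
definition sp_dist :: "('v \<times> 'v) set \<Rightarrow> ('v \<times> 'v \<Rightarrow> real) \<Rightarrow> 'v \<Rightarrow> 'v \<Rightarrow> ereal" where
  "sp_dist E \<omega> u v = (INF p \<in> {p. walk E p u v}. ereal (walk_weight \<omega> p))"

(* Token game: a state is a list (v_0, v_1, ..., v_k) of length k+1;
   tg_move E \<omega> k st st' c: one move from st to st' of cost c *)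
inductive tg_move ::
  "('v \<times> 'v) set \<Rightarrow> ('v \<times> 'v \<Rightarrow> real) \<Rightarrow> nat \<Rightarrow> 'v list \<Rightarrow> 'v list \<Rightarrow> ereal \<Rightarrow> bool"
  for E \<omega> k where
  backward: "(w, st ! 0) \<in> E \<Longrightarrow>
     tg_move E \<omega> k st (st[0 := w]) (ereal (\<omega> (w, st ! 0)))"
| forward: "i \<in> {1..k} \<Longrightarrow> (st ! i, x) \<in> E \<Longrightarrow>
     tg_move E \<omega> k st (st[i := x]) (ereal (\<omega> (st ! i, x)))"
| flip: "i \<in> {1..k} \<Longrightarrow>
     tg_move E \<omega> k st (st[0 := st ! i, i := st ! 0]) (sp_dist E \<omega> (st ! i) (st ! 0))"

inductive tg_run ::
  "('v \<times> 'v) set \<Rightarrow> ('v \<times> 'v \<Rightarrow> real) \<Rightarrow> nat \<Rightarrow> 'v list \<Rightarrow> 'v list \<Rightarrow> ereal \<Rightarrow> bool"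
  for E \<omega> k where
  nil: "tg_run E \<omega> k st st 0"
| cons: "tg_move E \<omega> k st st' c \<Longrightarrow> tg_run E \<omega> k st' st'' d \<Longrightarrow>
     tg_run E \<omega> k st st'' (c + d)"

definition OPT_token ::
  "('v \<times> 'v) set \<Rightarrow> ('v \<times> 'v \<Rightarrow> real) \<Rightarrow> nat \<Rightarrow> 'v \<Rightarrow> 'v \<Rightarrow> ereal" where
  "OPT_token E \<omega> k s t =
     (INF c \<in> {c. tg_run E \<omega> k (replicate (Suc k) s) (replicate (Suc k) t) c}. c)"

end

theory Submission imports Defs begin

text \<open>
  A run of the token game is turned into a solution of no larger cost by reading it backwards.
  For the suffix of the run starting in state v we maintain walks F_i from v_i to t and B from
  t to v_0 whose cost is at most the cost of that suffix. A forward or backward move adds one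
  edge to one walk. A flip of the tokens b and f_i is paid for by a shortest walk P from v_i to
  v_0, which is prepended to F_i and appended to B: since the cost of an edge is the maximum of
  its two multiplicities, using P in both walks raises the cost by at most the weight of P.
  Shortest walks exist because the weights are nonnegative, so it suffices to minimise over the
  finitely many walks without repeated vertices.
\<close>

(* Used via subst only: as a simp rule it loops, its right-hand side containing the instance
   ys = [] of its left-hand side. *)
lemma zip_tl_append_Cons:
  "zip (xs @ y # ys) (tl (xs @ y # ys)) = zip (xs @ [y]) (tl (xs @ [y])) @ zip (y # ys) ys"
  by (induction xs rule: induct_list012) simp_all

lemma walk_append_Cons_iff:
  "walk E (xs @ y # ys) u v \<longleftrightarrow> walk E (xs @ [y]) u y \<and> walk E (y # ys) y v"
proof -
  have "hd (xs @ y # ys) = hd (xs @ [y])" by (cases xs) simp_all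
  then show ?thesis
    unfolding walk_def by (subst zip_tl_append_Cons) auto
qed

lemma edges_of_append_Cons:
  "edges_of (xs @ y # ys) = edges_of (xs @ [y]) \<union> edges_of (y # ys)"
  unfolding edges_of_def by (subst zip_tl_append_Cons) simp

lemma walk_weight_append_Cons:
  "walk_weight \<omega> (xs @ y # ys) = walk_weight \<omega> (xs @ [y]) + walk_weight \<omega> (y # ys)"
  unfolding walk_weight_def by (subst zip_tl_append_Cons) simp

lemma walk_join:
  assumes "walk E p u v" "walk E q v w"
  shows "walk E (p @ tl q) u w" and "edges_of (p @ tl q) = edges_of p \<union> edges_of q"
proof -
  obtain xs where p: "p = xs @ [v]"
    using assms(1) unfolding walk_def by (metis append_butlast_last_id)
  obtain ys where q: "q = v # ys"
    using assms(2) unfolding walk_def by (metis list.collapse)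
  show "walk E (p @ tl q) u w"
    using assms walk_append_Cons_iff[of E xs v ys u w] by (simp add: p q)
  show "edges_of (p @ tl q) = edges_of p \<union> edges_of q"
    using edges_of_append_Cons[of xs v ys] by (simp add: p q)
qed

lemma walk_weight_nonneg:
  assumes "walk E p u v" "\<And>e. e \<in> E \<Longrightarrow> \<omega> e \<ge> 0"
  shows "walk_weight \<omega> p \<ge> 0"
  using assms unfolding walk_def walk_weight_def by (intro sum_list_nonneg) auto

lemma walk_remove_cycles:
  assumes "walk E p u v" "\<And>e. e \<in> E \<Longrightarrow> \<omega> e \<ge> 0"
  obtains q where "walk E q u v" "distinct q" "walk_weight \<omega> q \<le> walk_weight \<omega> p"
  using assms(1)
proof (induction "length p" arbitrary: p rule: less_induct)
  case less
  show ?case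
  proof (cases "distinct p")
    case True
    then show ?thesis using less.prems by blast
  next
    case False
    then obtain xs y ys zs where p: "p = xs @ y # ys @ y # zs"
      using not_distinct_decomp by fastforce
    have w1: "walk E (xs @ [y]) u y" and w2: "walk E (y # ys @ [y]) y y"
      and w3: "walk E (y # zs) y v"
      using less.prems(2) walk_append_Cons_iff[of E xs y "ys @ y # zs"]
        walk_append_Cons_iff[of E "y # ys" y zs]
      by (simp_all add: p)
    have shortcut: "walk E (xs @ y # zs) u v"
      using w1 w3 walk_append_Cons_iff by fast
    have "walk_weight \<omega> p
        = walk_weight \<omega> (xs @ [y]) + walk_weight \<omega> (y # ys @ [y]) + walk_weight \<omega> (y # zs)"
      using walk_weight_append_Cons[of \<omega> xs y "ys @ y # zs"]
        walk_weight_append_Cons[of \<omega> "y # ys" y zs]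
      by (simp add: p)
    moreover have "walk_weight \<omega> (y # ys @ [y]) \<ge> 0"
      using walk_weight_nonneg[OF w2 assms(2)] .
    ultimately have "walk_weight \<omega> (xs @ y # zs) \<le> walk_weight \<omega> p"
      using walk_weight_append_Cons[of \<omega> xs y zs] by simp
    moreover have "length (xs @ y # zs) < length p" by (simp add: p)
    ultimately show ?thesis using less.hyps[OF _ less.prems(1) shortcut] by fastforce
  qed
qed

lemma walk_vertices_subset:
  assumes "walk E p u v"
  shows "set p \<subseteq> insert u (snd ` E)"
proof -
  have p: "p = u # tl p" using assms unfolding walk_def by (metis list.collapse)
  have "set (tl p) = snd ` set (zip p (tl p))"
    by (simp add: map_snd_zip_take flip: list.set_map)
  then have "set (tl p) \<subseteq> snd ` E" using assms unfolding walk_def by auto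
  then show ?thesis by (subst p) auto
qed

lemma sp_dist_attained:
  assumes "finite E" "\<And>e. e \<in> E \<Longrightarrow> \<omega> e \<ge> 0" "sp_dist E \<omega> u v \<noteq> \<infinity>"
  obtains p where "walk E p u v" "ereal (walk_weight \<omega> p) \<le> sp_dist E \<omega> u v"
proof -
  define W where "W = {q. walk E q u v \<and> distinct q}"
  have "W \<subseteq> {q. set q \<subseteq> insert u (snd ` E) \<and> distinct q}"
    unfolding W_def by (auto dest: walk_vertices_subset)
  then have "finite W"
    by (rule finite_subset) (simp add: assms(1) finite_subset_distinct)
  have "\<exists>p. walk E p u v"
  proof (rule ccontr)
    assume "\<nexists>p. walk E p u v"
    then have "sp_dist E \<omega> u v = \<infinity>" unfolding sp_dist_def by (simp add: top_ereal_def)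
    then show False using assms(3) by simp
  qed
  then obtain p where "walk E p u v" by blast
  then obtain q where "walk E q u v" "distinct q"
    using assms(2) by (rule walk_remove_cycles)
  then have "W \<noteq> {}" unfolding W_def by blast
  define m where "m = Min (walk_weight \<omega> ` W)"
  have "m \<in> walk_weight \<omega> ` W" unfolding m_def using \<open>finite W\<close> \<open>W \<noteq> {}\<close> by simp
  then obtain q where q: "q \<in> W" "walk_weight \<omega> q = m" by blast
  have "ereal m \<le> sp_dist E \<omega> u v"
    unfolding sp_dist_def
  proof (rule INF_greatest)
    fix p assume "p \<in> {p. walk E p u v}"
    then have "walk E p u v" by simp
    then obtain p' where "walk E p' u v" "distinct p'" "walk_weight \<omega> p' \<le> walk_weight \<omega> p"
      using assms(2) by (rule walk_remove_cycles)
    then have "p' \<in> W" unfolding W_def by blast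
    then have "m \<le> walk_weight \<omega> p'" unfolding m_def using \<open>finite W\<close> by simp
    with \<open>walk_weight \<omega> p' \<le> walk_weight \<omega> p\<close>
    show "ereal m \<le> ereal (walk_weight \<omega> p)" by simp
  qed
  then show ?thesis using that q unfolding W_def by blast
qed

definition edge_load :: "nat \<Rightarrow> (nat \<Rightarrow> 'v list) \<Rightarrow> 'v list \<Rightarrow> 'v \<times> 'v \<Rightarrow> nat" where
  "edge_load k F B e =
     max (card {i \<in> {1..k}. e \<in> edges_of (F i)}) (if e \<in> edges_of B then 1 else 0)"

lemma scss_cost_eq_sum_edge_load:
  "scss_cost E \<omega> k F B = (\<Sum>e\<in>E. \<omega> e * real (edge_load k F B e))"
  unfolding scss_cost_def edge_load_def ..

lemma edge_load_extend:
  assumes "\<And>j. j \<noteq> i \<Longrightarrow> F' j = F j"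
    and "edges_of (F' i) \<subseteq> edges_of p \<union> edges_of (F i)"
    and "edges_of B' \<subseteq> edges_of B \<union> edges_of p"
  shows "edge_load k F' B' e \<le> edge_load k F B e + (if e \<in> edges_of p then 1 else 0)"
proof (cases "e \<in> edges_of p")
  case False
  then have "{j \<in> {1..k}. e \<in> edges_of (F' j)} \<subseteq> {j \<in> {1..k}. e \<in> edges_of (F j)}"
    using assms(1,2) by fastforce
  then have "card {j \<in> {1..k}. e \<in> edges_of (F' j)} \<le> card {j \<in> {1..k}. e \<in> edges_of (F j)}"
    by (rule card_mono[rotated]) simp
  then show ?thesis using False assms(3) unfolding edge_load_def by auto
next
  case True
  have "{j \<in> {1..k}. e \<in> edges_of (F' j)} \<subseteq> insert i {j \<in> {1..k}. e \<in> edges_of (F j)}"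
    using assms(1) by auto
  then have "card {j \<in> {1..k}. e \<in> edges_of (F' j)}
      \<le> card (insert i {j \<in> {1..k}. e \<in> edges_of (F j)})"
    by (rule card_mono[rotated]) simp
  also have "\<dots> \<le> card {j \<in> {1..k}. e \<in> edges_of (F j)} + 1"
    by (simp add: card_insert_if)
  finally show ?thesis using True unfolding edge_load_def by auto
qed

lemma sum_set_le_sum_list:
  fixes f :: "'a \<Rightarrow> 'b::ordered_comm_monoid_add"
  assumes "\<And>x. x \<in> set xs \<Longrightarrow> f x \<ge> 0"
  shows "sum f (set xs) \<le> sum_list (map f xs)"
  using assms
proof (induction xs)
  case (Cons x xs)
  have "sum f (set (x # xs)) \<le> f x + sum f (set xs)"
    using Cons.prems by (simp add: sum.insert_if add_increasing)
  then show ?case using Cons by (simp add: add_left_mono order_trans)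
qed simp

lemma sum_edges_of_le_walk_weight:
  assumes "walk E p u v" "\<And>e. e \<in> E \<Longrightarrow> \<omega> e \<ge> 0"
  shows "sum \<omega> (edges_of p) \<le> walk_weight \<omega> p"
  using assms unfolding walk_def edges_of_def walk_weight_def
  by (intro sum_set_le_sum_list) auto

lemma scss_cost_extend:
  assumes "finite E" "\<And>e. e \<in> E \<Longrightarrow> \<omega> e \<ge> 0" "walk E p u v"
    and "\<And>j. j \<noteq> i \<Longrightarrow> F' j = F j"
    and "edges_of (F' i) \<subseteq> edges_of p \<union> edges_of (F i)"
    and "edges_of B' \<subseteq> edges_of B \<union> edges_of p"
  shows "scss_cost E \<omega> k F' B' \<le> scss_cost E \<omega> k F B + walk_weight \<omega> p"
proof -
  have "scss_cost E \<omega> k F' B'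
      \<le> (\<Sum>e\<in>E. \<omega> e * real (edge_load k F B e) + (if e \<in> edges_of p then \<omega> e else 0))"
    unfolding scss_cost_eq_sum_edge_load
  proof (rule sum_mono)
    fix e assume "e \<in> E"
    have "real (edge_load k F' B' e) \<le> real (edge_load k F B e) + (if e \<in> edges_of p then 1 else 0)"
      using edge_load_extend[of i F' F p B' B k e, OF assms(4-6)] by (simp split: if_splits)
    from mult_left_mono[OF this assms(2)[OF \<open>e \<in> E\<close>]]
    show "\<omega> e * real (edge_load k F' B' e)
        \<le> \<omega> e * real (edge_load k F B e) + (if e \<in> edges_of p then \<omega> e else 0)"
      by (simp add: distrib_left split: if_splits)
  qed
  also have "\<dots> = scss_cost E \<omega> k F B + sum \<omega> (E \<inter> edges_of p)"
    by (simp add: sum.distrib sum.inter_restrict[OF assms(1)] scss_cost_eq_sum_edge_load)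
  also have "E \<inter> edges_of p = edges_of p"
    using assms(3) unfolding walk_def edges_of_def by blast
  also have "sum \<omega> (edges_of p) \<le> walk_weight \<omega> p"
    using sum_edges_of_le_walk_weight[OF assms(3,2)] .
  finally show ?thesis by simp
qed

lemma tg_move_length: "tg_move E \<omega> k st st' c \<Longrightarrow> length st' = length st"
  by (induction rule: tg_move.induct) auto

lemma tg_move_extend_solution:
  assumes "finite E" "\<And>e. e \<in> E \<Longrightarrow> \<omega> e \<ge> 0"
    and move: "tg_move E \<omega> k st st1 c" "c \<noteq> \<infinity>" "length st = Suc k"
    and F: "\<forall>i\<in>{1..k}. walk E (F i) (st1 ! i) (st2 ! i)"
    and B: "walk E B (st2 ! 0) (st1 ! 0)"
  obtains F' B' where "\<forall>i\<in>{1..k}. walk E (F' i) (st ! i) (st2 ! i)"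
    and "walk E B' (st2 ! 0) (st ! 0)"
    and "ereal (scss_cost E \<omega> k F' B') \<le> ereal (scss_cost E \<omega> k F B) + c"
  using move(1)
proof cases
  case (backward w)
  define p where "p = [w, st ! 0]"
  have p: "walk E p w (st ! 0)" using backward by (simp add: p_def walk_def)
  have "st1 ! 0 = w" using backward move(3) by simp
  note B' = walk_join[OF B[unfolded this] p]
  have "\<forall>i\<in>{1..k}. walk E (F i) (st ! i) (st2 ! i)" using F backward by auto
  moreover have "scss_cost E \<omega> k F (B @ tl p) \<le> scss_cost E \<omega> k F B + walk_weight \<omega> p"
    by (rule scss_cost_extend[OF assms(1,2) p, where i=0]) (simp_all add: B'(2))
  moreover have "walk_weight \<omega> p = \<omega> (w, st ! 0)" by (simp add: p_def walk_weight_def)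
  ultimately show thesis using that B'(1) backward by auto
next
  case (forward i x)
  define p where "p = [st ! i, x]"
  have p: "walk E p (st ! i) x" using forward by (simp add: p_def walk_def)
  have st1: "st1 ! i = x" "\<And>j. j \<noteq> i \<Longrightarrow> st1 ! j = st ! j" using forward move(3) by auto
  have "walk E (F i) (st1 ! i) (st2 ! i)" using F forward(3) by blast
  then have "walk E (F i) x (st2 ! i)" by (simp only: st1(1))
  note Fi = walk_join[OF p this]
  define F' where "F' = F(i := p @ tl (F i))"
  have "\<forall>j\<in>{1..k}. walk E (F' j) (st ! j) (st2 ! j)" using F Fi st1(2)
    by (auto simp: F'_def)
  moreover have "walk E B (st2 ! 0) (st ! 0)" using B forward by auto
  moreover have "scss_cost E \<omega> k F' B \<le> scss_cost E \<omega> k F B + walk_weight \<omega> p"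
    by (rule scss_cost_extend[OF assms(1,2) p, where i=i]) (auto simp: F'_def Fi(2))
  moreover have "walk_weight \<omega> p = \<omega> (st ! i, x)" by (simp add: p_def walk_weight_def)
  ultimately show thesis using that forward by auto
next
  case (flip i)
  then have finite_dist: "sp_dist E \<omega> (st ! i) (st ! 0) \<noteq> \<infinity>" using move(2) by simp
  obtain p where p: "walk E p (st ! i) (st ! 0)"
    and "ereal (walk_weight \<omega> p) \<le> sp_dist E \<omega> (st ! i) (st ! 0)"
    by (rule sp_dist_attained[OF assms(1,2) finite_dist])
  then have "ereal (walk_weight \<omega> p) \<le> c" using flip by simp
  have st1: "st1 ! i = st ! 0" "st1 ! 0 = st ! i"
    "\<And>j. j \<noteq> i \<Longrightarrow> j \<noteq> 0 \<Longrightarrow> st1 ! j = st ! j"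
    using flip move(3) by auto
  have "walk E (F i) (st1 ! i) (st2 ! i)" using F flip(3) by blast
  then have "walk E (F i) (st ! 0) (st2 ! i)" by (simp only: st1(1))
  note Fi = walk_join[OF p this]
  note B' = walk_join[OF B[unfolded st1(2)] p]
  define F' where "F' = F(i := p @ tl (F i))"
  have F': "\<forall>j\<in>{1..k}. walk E (F' j) (st ! j) (st2 ! j)" using F Fi st1(3)
    by (auto simp: F'_def)
  have "scss_cost E \<omega> k F' (B @ tl p) \<le> scss_cost E \<omega> k F B + walk_weight \<omega> p"
    by (rule scss_cost_extend[OF assms(1,2) p, where i=i]) (auto simp: F'_def Fi(2) B'(2))
  then have "ereal (scss_cost E \<omega> k F' (B @ tl p))
      \<le> ereal (scss_cost E \<omega> k F B) + ereal (walk_weight \<omega> p)"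
    by simp
  also have "\<dots> \<le> ereal (scss_cost E \<omega> k F B) + c"
    by (rule add_left_mono) fact
  finally show thesis using that F' B'(1) by blast
qed

lemma tg_run_solution:
  assumes "finite E" "\<And>e. e \<in> E \<Longrightarrow> \<omega> e \<ge> 0"
  shows "tg_run E \<omega> k st st' c \<Longrightarrow> length st = Suc k \<Longrightarrow> c \<noteq> \<infinity> \<Longrightarrow>
    \<exists>F B. (\<forall>i\<in>{1..k}. walk E (F i) (st ! i) (st' ! i)) \<and> walk E B (st' ! 0) (st ! 0)
      \<and> ereal (scss_cost E \<omega> k F B) \<le> c"
proof (induction rule: tg_run.induct)
  case (nil st)
  have "scss_cost E \<omega> k (\<lambda>i. [st ! i]) [st ! 0] = 0" by (simp add: scss_cost_def edges_of_def)
  then show ?case by (intro exI[of _ "\<lambda>i. [st ! i]"] exI[of _ "[st ! 0]"]) (simp add: walk_def)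
next
  case (cons st st1 c st2 d)
  have "c \<noteq> \<infinity>" "d \<noteq> \<infinity>" using cons.prems(2) by auto
  moreover have "length st1 = Suc k" using tg_move_length[OF cons.hyps(1)] cons.prems(1) by simp
  ultimately obtain F B where F: "\<forall>i\<in>{1..k}. walk E (F i) (st1 ! i) (st2 ! i)"
    and B: "walk E B (st2 ! 0) (st1 ! 0)" and cost: "ereal (scss_cost E \<omega> k F B) \<le> d"
    using cons.IH by blast
  obtain F' B' where "\<forall>i\<in>{1..k}. walk E (F' i) (st ! i) (st2 ! i)"
    and "walk E B' (st2 ! 0) (st ! 0)"
    and "ereal (scss_cost E \<omega> k F' B') \<le> ereal (scss_cost E \<omega> k F B) + c"
    using tg_move_extend_solution[OF assms cons.hyps(1) \<open>c \<noteq> \<infinity>\<close> cons.prems(1) F B] by blast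
  moreover have "ereal (scss_cost E \<omega> k F B) + c \<le> c + d"
    using add_right_mono[OF cost, of c] by (simp add: add.commute)
  ultimately show ?case by (blast intro: order_trans)
qed

theorem lemma5:
  fixes V :: "'v set" and E :: "('v \<times> 'v) set" and \<omega> :: "'v \<times> 'v \<Rightarrow> real"
    and k :: nat and s t :: 'v
  assumes "finite V" and "E \<subseteq> V \<times> V" and "\<And>e. e \<in> E \<Longrightarrow> \<omega> e \<ge> 0"
    and "s \<in> V" and "t \<in> V"
  shows "OPT_scss E \<omega> k s t \<le> OPT_token E \<omega> k s t"
  unfolding OPT_token_def
proof (rule INF_greatest)
  fix c assume "c \<in> {c. tg_run E \<omega> k (replicate (Suc k) s) (replicate (Suc k) t) c}"
  then have run: "tg_run E \<omega> k (replicate (Suc k) s) (replicate (Suc k) t) c" by simp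
  show "OPT_scss E \<omega> k s t \<le> c"
  proof (cases "c = \<infinity>")
    case False
    have "finite E" using assms(1,2) finite_subset by blast
    obtain F B
      where "\<forall>i\<in>{1..k}. walk E (F i) (replicate (Suc k) s ! i) (replicate (Suc k) t ! i)"
      and "walk E B (replicate (Suc k) t ! 0) (replicate (Suc k) s ! 0)"
      and "ereal (scss_cost E \<omega> k F B) \<le> c"
      using tg_run_solution[OF \<open>finite E\<close> assms(3) run] False by auto
    then have "scss_feasible E k s t F B" "ereal (scss_cost E \<omega> k F B) \<le> c"
      unfolding scss_feasible_def by (simp_all add: nth_replicate del: replicate_Suc)
    then show ?thesis unfolding OPT_scss_def by (intro INF_lower2[of "(F, B)"]) simp_all
  qed simp
qed

end
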